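(* In the setting described in the context, let $\bar\eta>0$ satisfy $g(\mathbf Q)-g(\mathbf X)\ge\bar\eta\,d_F^2(\mathbf X,\mathbf Q)$ for all $\mathbf X\in\mathrm{St}(d,K)$. If $\hat{\mathbf X}$ is a global optimal solution of $\max_{\mathbf X\in\mathrm{St}(d,K)}f(\mathbf X)$, where $f(\mathbf X)=g(\mathbf X)+\sum_{k=1}^K\mathbf x_k^\top\Delta_k\mathbf x_k$, then $$d_F(\hat{\mathbf X},\mathbf Q)\le\frac{2\sqrt K}{\bar\eta}\max_{k\in[K]}\|\Delta_k\|.$$
   Context: $d>K\ge1$, $\mathrm{St}(d,K)=\{\mathbf X\in\mathbb R^{d\times K}:\mathbf X^\top\mathbf X=\mathbf I_K\}$, $\mathbf Q\in\mathrm{St}(d,K)$, $\lambda_1>\dots>\lambda_K>0$, $\boldsymbol\Theta=\mathrm{diag}(\sqrt{\lambda_1},\dots,\sqrt{\lambda_K})$. Integers $L\ge1$, $n_1,\dots,n_L\ge1$, $n=\sum_ln_l$; $v_1>\dots>v_L>0$; data $\mathbf y_{l,i}=\mathbf Q\boldsymbol\Theta\mathbf z_{l,i}+\boldsymbol\eta_{l,i}\in\mathbb R^d$ with $\mathbf z_{l,i}$ i.i.d. $\mathcal N(\mathbf0,\mathbf I_K)$ independent of $\boldsymbol\eta_{l,i}$ i.i.d. $\mathcal N(\mathbf0,v_l\mathbf I_d)$. $w_{l,k}=\lambda_k/(\lambda_k+v_l)$, $a_k=\sum_lw_{l,k}\frac{n_l}{n}\frac1{v_l}$, $\gamma_k=\sum_lw_{l,k}\frac{n_l}{n}$,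 $\mathbf M_k=\frac1n\sum_l\sum_i\frac{w_{l,k}}{v_l}\mathbf y_{l,i}\mathbf y_{l,i}^\top-\gamma_k\mathbf I_d$, $\Delta_k=\mathbf M_k-a_k\mathbf Q\boldsymbol\Theta^2\mathbf Q^\top$ ($\|\cdot\|$ operator norm). $g(\mathbf X)=\mathrm{tr}(\mathbf X^\top\mathbf Q\boldsymbol\Theta^2\mathbf Q^\top\mathbf X\,\mathrm{diag}(a_1,\dots,a_K))$, $\mathbf x_k$ is the $k$-th column of $\mathbf X$, $d_F(\mathbf X,\mathbf Q)=\min_{\mathbf q\in\{\pm1\}^K}\|\mathbf X-\mathbf Q\,\mathrm{diag}(\mathbf q)\|_F$. *)

theory Defs
  imports "HOL-Analysis.Analysis"
begin

text \<open>Conventions: indices are 0-based. A d x K matrix X is represented by its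
  columns x :: nat => real^'d, k < K (d = CARD('d)). Data y l i for l < L, i < nn l.\<close>

definition outer :: "real^'d \<Rightarrow> real^'d \<Rightarrow> real^'d^'d" where
  "outer u v = (\<chi> i j. u $ i * v $ j)"

definition stiefel :: "nat \<Rightarrow> (nat \<Rightarrow> real^'d) \<Rightarrow> bool" where
  "stiefel K x \<longleftrightarrow> (\<forall>i<K. \<forall>j<K. x i \<bullet> x j = (if i = j then 1 else 0))"

text \<open>Q Theta^2 Q^T = sum_m lambda_m q_m q_m^T\<close>
definition QT2Q :: "nat \<Rightarrow> (nat \<Rightarrow> real) \<Rightarrow> (nat \<Rightarrow> real^'d) \<Rightarrow> real^'d^'d" where
  "QT2Q K lam q = (\<Sum>m<K. lam m *\<^sub>R outer (q m) (q m))"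

definition wgt :: "(nat \<Rightarrow> real) \<Rightarrow> (nat \<Rightarrow> real) \<Rightarrow> nat \<Rightarrow> nat \<Rightarrow> real" where
  "wgt lam v l k = lam k / (lam k + v l)"

definition ntot :: "nat \<Rightarrow> (nat \<Rightarrow> nat) \<Rightarrow> nat" where
  "ntot L nn = (\<Sum>l<L. nn l)"

definition acoef :: "nat \<Rightarrow> (nat \<Rightarrow> nat) \<Rightarrow> (nat \<Rightarrow> real) \<Rightarrow> (nat \<Rightarrow> real) \<Rightarrow> nat \<Rightarrow> real" where
  "acoef L nn lam v k = (\<Sum>l<L. wgt lam v l k * (real (nn l) / real (ntot L nn)) * (1 / v l))"

definition gcoef :: "nat \<Rightarrow> (nat \<Rightarrow> nat) \<Rightarrow> (nat \<Rightarrow> real) \<Rightarrow> (nat \<Rightarrow> real) \<Rightarrow> nat \<Rightarrow> real" where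
  "gcoef L nn lam v k = (\<Sum>l<L. wgt lam v l k * (real (nn l) / real (ntot L nn)))"

definition Mmat :: "nat \<Rightarrow> (nat \<Rightarrow> nat) \<Rightarrow> (nat \<Rightarrow> real) \<Rightarrow> (nat \<Rightarrow> real)
    \<Rightarrow> (nat \<Rightarrow> nat \<Rightarrow> real^'d) \<Rightarrow> nat \<Rightarrow> real^'d^'d" where
  "Mmat L nn lam v y k =
     (1 / real (ntot L nn)) *\<^sub>R (\<Sum>l<L. \<Sum>i<nn l. (wgt lam v l k / v l) *\<^sub>R outer (y l i) (y l i))
     - gcoef L nn lam v k *\<^sub>R mat 1"

definition Delta :: "nat \<Rightarrow> nat \<Rightarrow> (nat \<Rightarrow> nat) \<Rightarrow> (nat \<Rightarrow> real) \<Rightarrow> (nat \<Rightarrow> real)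
    \<Rightarrow> (nat \<Rightarrow> real^'d) \<Rightarrow> (nat \<Rightarrow> nat \<Rightarrow> real^'d) \<Rightarrow> nat \<Rightarrow> real^'d^'d" where
  "Delta K L nn lam v q y k = Mmat L nn lam v y k - acoef L nn lam v k *\<^sub>R QT2Q K lam q"

text \<open>g(X) = tr(X^T Q Theta^2 Q^T X diag(a)) = sum_k a_k x_k^T (Q Theta^2 Q^T) x_k\<close>
definition gfun :: "nat \<Rightarrow> nat \<Rightarrow> (nat \<Rightarrow> nat) \<Rightarrow> (nat \<Rightarrow> real) \<Rightarrow> (nat \<Rightarrow> real)
    \<Rightarrow> (nat \<Rightarrow> real^'d) \<Rightarrow> (nat \<Rightarrow> real^'d) \<Rightarrow> real" where
  "gfun K L nn lam v q x = (\<Sum>k<K. acoef L nn lam v k * (x k \<bullet> (QT2Q K lam q *v x k)))"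

definition ffun :: "nat \<Rightarrow> nat \<Rightarrow> (nat \<Rightarrow> nat) \<Rightarrow> (nat \<Rightarrow> real) \<Rightarrow> (nat \<Rightarrow> real)
    \<Rightarrow> (nat \<Rightarrow> real^'d) \<Rightarrow> (nat \<Rightarrow> nat \<Rightarrow> real^'d) \<Rightarrow> (nat \<Rightarrow> real^'d) \<Rightarrow> real" where
  "ffun K L nn lam v q y x = gfun K L nn lam v q x
      + (\<Sum>k<K. x k \<bullet> (Delta K L nn lam v q y k *v x k))"

definition dF :: "nat \<Rightarrow> (nat \<Rightarrow> real^'d) \<Rightarrow> (nat \<Rightarrow> real^'d) \<Rightarrow> real" where
  "dF K x q = Inf {sqrt (\<Sum>k<K. (norm (x k - s k *\<^sub>R q k))\<^sup>2) | s. \<forall>k<K. s k \<in> {-1, 1}}"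

definition opnorm :: "real^'d^'d \<Rightarrow> real" where
  "opnorm A = onorm (\<lambda>u. A *v u)"

end

theory Submission
  imports Defs
begin

text \<open>Optimality of the estimate for f = g + perturbation gives
  g(Q) - g(X) \<le> \<Sum>k (x_k' Delta_k x_k - q_k' Delta_k q_k). The quadratic forms are invariant
  under q_k \<mapsto> -q_k, so each term is at most 2 \<parallel>Delta_k\<parallel> \<parallel>x_k - s_k q_k\<parallel> for the
  signs s realising d_F, and Cauchy-Schwarz bounds the sum by 2 sqrt K max \<parallel>Delta_k\<parallel> d_F.
  Comparing with the quadratic growth etabar d_F^2 of g and dividing by d_F gives the bound.\<close>

lemma opnorm_nonneg: "0 \<le> opnorm (A :: real^'d^'d)"
  unfolding opnorm_def by (rule onorm_pos_le) simp

lemma norm_matrix_vector_mult_le_opnorm: "norm (A *v u) \<le> opnorm A * norm u"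
  unfolding opnorm_def by (rule onorm) simp

lemma quadratic_form_diff_le:
  fixes A :: "real^'d^'d" and x z :: "real^'d"
  shows "x \<bullet> (A *v x) - z \<bullet> (A *v z) \<le> opnorm A * (norm x + norm z) * norm (x - z)"
proof -
  have "x \<bullet> (A *v x) - z \<bullet> (A *v z) = (x - z) \<bullet> (A *v x) + z \<bullet> (A *v (x - z))"
    by (simp add: matrix_vector_mult_diff_distrib inner_diff_left inner_diff_right)
  also have "\<dots> \<le> norm (x - z) * norm (A *v x) + norm z * norm (A *v (x - z))"
    by (intro add_mono norm_cauchy_schwarz)
  also have "\<dots> \<le> norm (x - z) * (opnorm A * norm x) + norm z * (opnorm A * norm (x - z))"
    by (intro add_mono mult_left_mono norm_matrix_vector_mult_le_opnorm) simp_all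
  also have "\<dots> = opnorm A * (norm x + norm z) * norm (x - z)"
    by (simp add: algebra_simps)
  finally show ?thesis .
qed

lemma quadratic_form_scaleR:
  fixes A :: "real^'d^'d"
  shows "(c *\<^sub>R u) \<bullet> (A *v (c *\<^sub>R u)) = c\<^sup>2 * (u \<bullet> (A *v u))"
  by (simp add: matrix_vector_mult_scaleR power2_eq_square)

lemma sum_abs_le_sqrt_card_mult_L2_set:
  "(\<Sum>i\<in>A. \<bar>f i\<bar>) \<le> sqrt (real (card A)) * L2_set f A"
  using L2_set_mult_ineq[where f = "\<lambda>_. 1" and g = f and A = A] by (simp add: L2_set_constant)

lemma stiefel_norm_eq_1: "stiefel K x \<Longrightarrow> k < K \<Longrightarrow> norm (x k) = 1"
  unfolding stiefel_def by (simp add: norm_eq_1)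

text \<open>Only the signs on the first K indices matter, so the infimum defining dF ranges over
  finitely many values and is a minimum.\<close>
lemma dF_attained:
  obtains s where "\<forall>k<K. s k \<in> {-1, 1}"
    and "dF K x q = sqrt (\<Sum>k<K. (norm (x k - s k *\<^sub>R q k))\<^sup>2)"
proof -
  define f where "f s = sqrt (\<Sum>k<K. (norm (x k - s k *\<^sub>R q k))\<^sup>2)" for s :: "nat \<Rightarrow> real"
  define P where "P = PiE {..<K} (\<lambda>_. {-1, 1 :: real})"
  have "{f s | s. \<forall>k<K. s k \<in> {-1, 1}} = f ` P"
  proof (intro equalityI subsetI)
    fix t assume "t \<in> {f s | s. \<forall>k<K. s k \<in> {-1, 1}}"
    then obtain s where s: "\<forall>k<K. s k \<in> {-1, 1}" and t: "t = f s" by blast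
    have "restrict s {..<K} \<in> P" using s unfolding P_def by auto
    moreover have "f (restrict s {..<K}) = f s" unfolding f_def by simp
    ultimately show "t \<in> f ` P" unfolding t by (metis image_eqI)
  qed (auto simp: P_def PiE_def)
  then have dF_Inf: "dF K x q = Inf (f ` P)" unfolding dF_def f_def by simp
  have "finite (f ` P)" "f ` P \<noteq> {}"
    unfolding P_def by (auto simp: finite_PiE PiE_eq_empty_iff)
  then have "dF K x q \<in> f ` P"
    unfolding dF_Inf by (simp add: cInf_eq_Min)
  then show ?thesis using that unfolding f_def P_def by (auto simp: PiE_def)
qed

lemma dF_nonneg: "0 \<le> dF K x q"
  by (rule dF_attained[of K x q]) (simp add: sum_nonneg)

lemma sum_quadratic_form_diff_le:
  fixes A :: "nat \<Rightarrow> real^'d^'d"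
  assumes x: "stiefel K x" and q: "stiefel K q"
    and s: "\<forall>k<K. s k \<in> {-1, 1}" and M: "\<forall>k<K. opnorm (A k) \<le> M" and "0 \<le> M"
  shows "(\<Sum>k<K. x k \<bullet> (A k *v x k) - q k \<bullet> (A k *v q k))
      \<le> 2 * M * sqrt (real K) * sqrt (\<Sum>k<K. (norm (x k - s k *\<^sub>R q k))\<^sup>2)"
proof -
  have term_le: "x k \<bullet> (A k *v x k) - q k \<bullet> (A k *v q k) \<le> 2 * M * norm (x k - s k *\<^sub>R q k)"
    if k: "k < K" for k
  proof -
    have s2: "(s k)\<^sup>2 = 1" and ns: "norm (s k *\<^sub>R q k) = 1"
      using s k stiefel_norm_eq_1[OF q k] by auto
    have "x k \<bullet> (A k *v x k) - q k \<bullet> (A k *v q k)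
        = x k \<bullet> (A k *v x k) - (s k *\<^sub>R q k) \<bullet> (A k *v (s k *\<^sub>R q k))"
      by (subst quadratic_form_scaleR) (simp add: s2)
    also have "\<dots> \<le> opnorm (A k) * (norm (x k) + norm (s k *\<^sub>R q k)) * norm (x k - s k *\<^sub>R q k)"
      by (rule quadratic_form_diff_le)
    also have "\<dots> = opnorm (A k) * 2 * norm (x k - s k *\<^sub>R q k)"
      by (simp only: stiefel_norm_eq_1[OF x k] ns one_add_one)
    also have "\<dots> \<le> 2 * M * norm (x k - s k *\<^sub>R q k)"
      using M k by (simp add: mult_right_mono)
    finally show ?thesis .
  qed
  have "(\<Sum>k<K. x k \<bullet> (A k *v x k) - q k \<bullet> (A k *v q k))
      \<le> 2 * M * (\<Sum>k<K. \<bar>norm (x k - s k *\<^sub>R q k)\<bar>)"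
    using sum_mono[of "{..<K}", OF term_le] by (simp add: sum_distrib_left)
  also have "\<dots> \<le> 2 * M * (sqrt (real K) * L2_set (\<lambda>k. norm (x k - s k *\<^sub>R q k)) {..<K})"
    using sum_abs_le_sqrt_card_mult_L2_set[where f = "\<lambda>k. norm (x k - s k *\<^sub>R q k)" and A = "{..<K}"] \<open>0 \<le> M\<close>
    by (intro mult_left_mono) simp_all
  finally show ?thesis by (simp add: L2_set_def mult.assoc)
qed

lemma gfun_gap_le_Delta_gap:
  assumes "ffun K L nn lam v q y q \<le> ffun K L nn lam v q y x"
  shows "gfun K L nn lam v q q - gfun K L nn lam v q x
    \<le> (\<Sum>k<K. x k \<bullet> (Delta K L nn lam v q y k *v x k) - q k \<bullet> (Delta K L nn lam v q y k *v q k))"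
  using assms unfolding ffun_def sum_subtractf by simp

theorem lemma8:
  fixes K L :: nat and nn :: "nat \<Rightarrow> nat" and lam v :: "nat \<Rightarrow> real"
    and q :: "nat \<Rightarrow> real^'d" and y :: "nat \<Rightarrow> nat \<Rightarrow> real^'d"
    and etabar :: real and xh :: "nat \<Rightarrow> real^'d"
  assumes dK: "K < CARD('d)" and K1: "1 \<le> K"
    and Q: "stiefel K q"
    and lam_dec: "\<forall>i j. i < j \<and> j < K \<longrightarrow> lam j < lam i" and lam_pos: "\<forall>k<K. 0 < lam k"
    and L1: "1 \<le> L" and nn1: "\<forall>l<L. 1 \<le> nn l"
    and v_dec: "\<forall>i j. i < j \<and> j < L \<longrightarrow> v j < v i" and v_pos: "\<forall>l<L. 0 < v l"
    and eta_pos: "0 < etabar"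
    and growth: "\<forall>x. stiefel K x \<longrightarrow>
        gfun K L nn lam v q q - gfun K L nn lam v q x \<ge> etabar * (dF K x q)\<^sup>2"
    and Xh: "stiefel K xh"
    and opt: "\<forall>x. stiefel K x \<longrightarrow> ffun K L nn lam v q y x \<le> ffun K L nn lam v q y xh"
  shows "dF K xh q \<le> 2 * sqrt (real K) / etabar
           * Max ((\<lambda>k. opnorm (Delta K L nn lam v q y k)) ` {..<K})"
proof -
  define M where "M = Max ((\<lambda>k. opnorm (Delta K L nn lam v q y k)) ` {..<K})"
  have M: "\<forall>k<K. opnorm (Delta K L nn lam v q y k) \<le> M"
    unfolding M_def by auto
  have "0 \<le> M" using order_trans[OF opnorm_nonneg M[rule_format, of 0]] K1 by simp
  obtain s where s: "\<forall>k<K. s k \<in> {-1, 1}"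
    and dF: "dF K xh q = sqrt (\<Sum>k<K. (norm (xh k - s k *\<^sub>R q k))\<^sup>2)"
    by (rule dF_attained)
  have "etabar * (dF K xh q)\<^sup>2 \<le> gfun K L nn lam v q q - gfun K L nn lam v q xh"
    using growth Xh by blast
  also have "\<dots> \<le> 2 * M * sqrt (real K) * dF K xh q"
    unfolding dF using gfun_gap_le_Delta_gap[OF opt[rule_format, OF Q]]
      sum_quadratic_form_diff_le[OF Xh Q s M \<open>0 \<le> M\<close>] by linarith
  finally have "etabar * dF K xh q * dF K xh q \<le> 2 * M * sqrt (real K) * dF K xh q"
    by (simp add: power2_eq_square mult.assoc)
  then have "etabar * dF K xh q \<le> 2 * M * sqrt (real K)"
    using dF_nonneg[of K xh q] \<open>0 \<le> M\<close> eta_pos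
    by (cases "dF K xh q = 0") (simp_all add: mult_le_cancel_right)
  then show ?thesis
    using eta_pos unfolding M_def by (simp add: field_simps)
qed

end
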